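(* Let $D=\{a_1/q_1,\dots,a_r/q_r\}\subset\mathbb{T}$, where each $a_j/q_j$ is an irreducible fraction with $q_j\equiv 2\pmod 4$. Then $\mathrm{Md}_{\mathbb{T}}(D)=1/2$, and there exists a Borel $D$-avoiding set $A\subset\mathbb{T}$ with $\mu(A)=1/2$.
   Context: $\mathbb{T}=\mathbb{R}/\mathbb{Z}$ with Haar probability measure $\mu$; $A$ is $D$-avoiding if $(A-A)\cap D=\emptyset$. $\mathrm{Md}_{\mathbb{T}}(D)=\sup\{\mu(A): A\subset\mathbb{T}\text{ Borel},\ (A-A)\cap D=\emptyset\}$. *)

theory Defs
  imports "HOL-Analysis.Analysis"
begin

text \<open>The torus T = R/Z is modelled by the fundamental domain [0,1) of the reals;
  a subset of T is a subset of [0,1), Haar probability measure is Lebesgue measure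
  restricted to [0,1), and a point of T is represented by any real number
  (differences are taken modulo the integers).\<close>

definition T_avoiding :: "real set \<Rightarrow> real set \<Rightarrow> bool" where
  "T_avoiding D A \<longleftrightarrow> (\<forall>x\<in>A. \<forall>y\<in>A. \<forall>d\<in>D. x - y - d \<notin> \<int>)"

definition Md_T :: "real set \<Rightarrow> real" where
  "Md_T D = Sup {measure lborel A | A. A \<subseteq> {0..<1} \<and> A \<in> sets borel \<and> T_avoiding D A}"

end

theory Submission
  imports Defs
begin

text \<open>If \<open>d \<in> D\<close> then the rotation of an avoiding set \<open>A\<close> by \<open>-d\<close> is disjoint from \<open>A\<close>
  and has the same measure, so \<open>2 \<mu>(A) \<le> 1\<close>. Conversely, let \<open>M\<close> be the product of the
  odd numbers \<open>q\<^sub>j / 2\<close>. Then every \<open>M a\<^sub>j / q\<^sub>j\<close> is an odd multiple of \<open>1/2\<close>, and the set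
  of \<open>x\<close> with \<open>frac (M x) < 1/2\<close>, a union of \<open>M\<close> intervals of length \<open>1/(2M)\<close>, avoids \<open>D\<close>:
  two of its points have \<open>M x - M y\<close> within \<open>1/2\<close> of an integer, which is never an odd
  multiple of \<open>1/2\<close>.\<close>

lemma measure_lborel_vimage_translation:
  fixes S :: "real set"
  assumes "S \<in> sets borel"
  shows "measure lborel ((+) c -` S) = measure lborel S"
proof -
  have "measure lborel ((+) c -` S) = measure (distr lborel borel ((+) c)) S"
    using assms by (simp add: measure_distr)
  then show ?thesis by (simp add: lborel_distr_plus)
qed

lemma fmeasurable_subset_unit_interval:
  fixes S :: "real set"
  assumes "S \<subseteq> {0..<1}" "S \<in> sets borel"
  shows "S \<in> fmeasurable lborel"
proof (rule fmeasurableI2)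
  show "{0..1::real} \<in> fmeasurable lborel"
    by (rule fmeasurable_compact[OF compact_Icc])
qed (use assms in auto)

lemma measure_subset_unit_interval_le_1:
  fixes S :: "real set"
  assumes "S \<subseteq> {0..<1}" "S \<in> sets borel"
  shows "measure lborel S \<le> 1"
proof -
  have "measure lborel S \<le> measure lborel {0..1::real}"
    using assms fmeasurable_compact[OF compact_Icc, of 0 1] by (intro measure_mono_fmeasurable) auto
  then show ?thesis by simp
qed

lemma rotation_vimage_eq:
  fixes S :: "real set"
  assumes "S \<subseteq> {0..<1}"
  shows "{x \<in> {0..<1}. frac (x + c) \<in> S} =
    (+) (frac c) -` (S \<inter> {frac c..}) \<union> (+) (frac c - 1) -` (S \<inter> {..<frac c})"
proof -
  have c_int: "c - frac c \<in> \<int>" "c - frac c + 1 \<in> \<int>"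
    by (simp_all add: frac_def)
  have frac_shift: "frac (x + c) = (if x + frac c < 1 then x + frac c else x + frac c - 1)"
    if "x \<in> {0..<1}" for x
    using that frac_lt_1[of c] c_int by (auto simp: frac_unique_iff algebra_simps)
  have frac_c: "0 \<le> frac c" "frac c < 1"
    by (simp_all add: frac_lt_1)
  show ?thesis
  proof (intro set_eqI iffI)
    fix x assume "x \<in> {x \<in> {0..<1}. frac (x + c) \<in> S}"
    then show "x \<in> (+) (frac c) -` (S \<inter> {frac c..}) \<union> (+) (frac c - 1) -` (S \<inter> {..<frac c})"
      using frac_shift[of x] frac_c by (auto simp: algebra_simps split: if_splits)
  next
    fix x assume "x \<in> (+) (frac c) -` (S \<inter> {frac c..}) \<union> (+) (frac c - 1) -` (S \<inter> {..<frac c})"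
    then consider "frac c + x \<in> S" "0 \<le> x" | "frac c - 1 + x \<in> S" "x < 1"
      by auto
    then show "x \<in> {x \<in> {0..<1}. frac (x + c) \<in> S}"
    proof cases
      case 1
      with assms have "x + frac c < 1"
        by (auto simp: add.commute)
      moreover from this frac_c have "x < 1"
        by linarith
      ultimately show ?thesis
        using 1 frac_shift[of x] by (simp add: add.commute)
    next
      case 2
      with assms have "0 \<le> x + frac c - 1"
        by (force simp: algebra_simps)
      with 2 frac_c have "x \<in> {0..<1}" "\<not> x + frac c < 1"
        by auto
      then have "frac (x + c) = frac c - 1 + x"
        using frac_shift by simp
      with 2 \<open>x \<in> {0..<1}\<close> show ?thesis
        by simp
    qed
  qed
qed

lemma
  fixes S :: "real set"
  assumes "S \<subseteq> {0..<1}" "S \<in> sets borel"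
  shows rotation_vimage_borel: "{x \<in> {0..<1}. frac (x + c) \<in> S} \<in> sets borel"
    and measure_rotation_vimage: "measure lborel {x \<in> {0..<1}. frac (x + c) \<in> S} = measure lborel S"
proof -
  let ?S\<^sub>1 = "S \<inter> {frac c..}" and ?S\<^sub>2 = "S \<inter> {..<frac c}"
  have S12: "?S\<^sub>1 \<in> sets borel" "?S\<^sub>2 \<in> sets borel"
    using assms by auto
  have vimage_borel: "(+) e -` T \<in> sets borel" if "T \<in> sets borel" for e and T :: "real set"
    using measurable_sets[OF _ that, of "(+) e" borel] by simp
  show "{x \<in> {0..<1}. frac (x + c) \<in> S} \<in> sets borel"
    unfolding rotation_vimage_eq[OF assms(1)] using S12 by (intro sets.Un vimage_borel)
  have "{x \<in> {0..<1}. frac (x + c) \<in> S} \<subseteq> {0..<1}"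
    by blast
  then have sub: "(+) (frac c) -` ?S\<^sub>1 \<subseteq> {0..<1}" "(+) (frac c - 1) -` ?S\<^sub>2 \<subseteq> {0..<1}"
    unfolding rotation_vimage_eq[OF assms(1)] by blast+
  have "measure lborel {x \<in> {0..<1}. frac (x + c) \<in> S}
      = measure lborel ((+) (frac c) -` ?S\<^sub>1) + measure lborel ((+) (frac c - 1) -` ?S\<^sub>2)"
  proof -
    have disj: "(+) (frac c) -` ?S\<^sub>1 \<inter> (+) (frac c - 1) -` ?S\<^sub>2 = {}"
      by (auto dest!: subsetD[OF assms(1)])
    have fm: "(+) (frac c) -` ?S\<^sub>1 \<in> fmeasurable lborel" "(+) (frac c - 1) -` ?S\<^sub>2 \<in> fmeasurable lborel"
      using sub S12 by (metis fmeasurable_subset_unit_interval vimage_borel)+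
    show ?thesis
      unfolding rotation_vimage_eq[OF assms(1)]
      using measure_Un3[OF fm] disj by simp
  qed
  also have "\<dots> = measure lborel ?S\<^sub>1 + measure lborel ?S\<^sub>2"
    by (simp only: measure_lborel_vimage_translation[OF S12(1)] measure_lborel_vimage_translation[OF S12(2)])
  also have "\<dots> = measure lborel S"
  proof -
    have fm: "?S\<^sub>1 \<in> fmeasurable lborel" "?S\<^sub>2 \<in> fmeasurable lborel"
      using assms S12 by (metis fmeasurable_subset_unit_interval Int_lower1 order_trans)+
    have "?S\<^sub>1 \<union> ?S\<^sub>2 = S" "?S\<^sub>1 \<inter> ?S\<^sub>2 = {}"
      by auto
    then show ?thesis
      using measure_Un3[OF fm] by simp
  qed
  finally show "measure lborel {x \<in> {0..<1}. frac (x + c) \<in> S} = measure lborel S" .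
qed

lemma measure_avoiding_le_half:
  assumes "A \<subseteq> {0..<1}" "A \<in> sets borel" "T_avoiding D A" "d \<in> D"
  shows "measure lborel A \<le> 1/2"
proof -
  let ?B = "{x \<in> {0..<1}. frac (x + d) \<in> A}"
  have "frac (x + d) \<notin> A" if "x \<in> A" for x
  proof
    assume "frac (x + d) \<in> A"
    then have "frac (x + d) - x - d \<notin> \<int>"
      using assms(3,4) that unfolding T_avoiding_def by blast
    moreover have "frac (x + d) - x - d \<in> \<int>"
      by (simp add: frac_def)
    ultimately show False
      by contradiction
  qed
  then have disj: "A \<inter> ?B = {}"
    by blast
  have B: "?B \<in> sets borel" "measure lborel ?B = measure lborel A"
    using rotation_vimage_borel[OF assms(1,2)] measure_rotation_vimage[OF assms(1,2)] by auto
  have "?B \<subseteq> {0..<1}"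
    by blast
  then have "measure lborel (A \<union> ?B) = 2 * measure lborel A"
    using measure_Un3[OF fmeasurable_subset_unit_interval[OF assms(1,2)]
        fmeasurable_subset_unit_interval[OF _ B(1)]] disj B(2) by simp
  moreover have "measure lborel (A \<union> ?B) \<le> 1"
    using assms(1,2) B(1) \<open>?B \<subseteq> {0..<1}\<close> by (intro measure_subset_unit_interval_le_1) auto
  ultimately show ?thesis
    by simp
qed

definition half_comb :: "nat \<Rightarrow> real set" where
  "half_comb M = (\<Union>k<M. {real k / real M ..< real k / real M + 1 / (2 * real M)})"

lemma half_comb_borel: "half_comb M \<in> sets borel"
  unfolding half_comb_def by auto

lemma half_comb_subset: "half_comb M \<subseteq> {0..<1}"
proof
  fix x assume "x \<in> half_comb M"
  then obtain k where k: "k < M" "real k / M \<le> x" "x < real k / M + 1 / (2 * M)"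
    unfolding half_comb_def by auto
  have "real k / M + 1 / (2 * M) \<le> (real k + 1) / M"
    using k(1) by (simp add: field_simps)
  also have "\<dots> \<le> 1"
    using k(1) by (simp add: field_simps)
  finally have "x < 1"
    using k(3) by linarith
  moreover have "0 \<le> x"
    using k(2) by (rule order_trans[rotated]) simp
  ultimately show "x \<in> {0..<1}"
    by simp
qed

lemma half_comb_floor:
  fixes x :: real
  assumes "x \<in> half_comb M"
  shows "\<exists>k::int. k \<le> M * x \<and> M * x < k + 1/2"
proof -
  obtain k where "k < M" "real k / M \<le> x" "x < real k / M + 1 / (2 * M)"
    using assms unfolding half_comb_def by auto
  then have "real k \<le> M * x" "M * x < real k + 1/2"
    by (auto simp: field_simps)
  then show ?thesis
    by (metis of_int_of_nat_eq)
qed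

lemma measure_half_comb:
  assumes "M > 0"
  shows "measure lborel (half_comb M) = 1/2"
proof -
  let ?I = "\<lambda>k. {real k / real M ..< real k / real M + 1 / (2 * real M)}"
  have "disjoint_family_on ?I {..<M}"
    unfolding disjoint_family_on_def
  proof (intro ballI impI, rule ccontr)
    fix k l assume "k \<noteq> l" "?I k \<inter> ?I l \<noteq> {}"
    then obtain x where "x \<in> ?I k" "x \<in> ?I l"
      by blast
    then have "real k \<le> M * x" "M * x < real k + 1/2" "real l \<le> M * x" "M * x < real l + 1/2"
      using assms by (auto simp: field_simps)
    then show False
      using \<open>k \<noteq> l\<close> by linarith
  qed
  then have "measure lborel (half_comb M) = (\<Sum>k<M. measure lborel (?I k))"
    unfolding half_comb_def by (intro measure_finite_Union) auto
  also have "\<dots> = 1/2"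
    using assms by simp
  finally show ?thesis .
qed

lemma half_comb_avoiding:
  assumes "\<And>d. d \<in> D \<Longrightarrow> \<exists>c::int. odd c \<and> M * d = c / 2"
  shows "T_avoiding D (half_comb M)"
  unfolding T_avoiding_def
proof (intro ballI notI)
  fix x y d assume x: "x \<in> half_comb M" and y: "y \<in> half_comb M" and d: "d \<in> D"
    and "x - y - d \<in> \<int>"
  then obtain n :: int where n: "x - y - d = n"
    by (metis Ints_cases)
  obtain k :: int where k: "k \<le> M * x" "M * x < k + 1/2"
    using half_comb_floor[OF x] by blast
  obtain l :: int where l: "l \<le> M * y" "M * y < l + 1/2"
    using half_comb_floor[OF y] by blast
  obtain c :: int where c: "odd c" "M * d = c / 2"
    using assms[OF d] by blast
  define z where "z = 2 * (int M * n + l - k) + c"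
  have "real_of_int z = 2 * (M * x - k) - 2 * (M * y - l)"
    using n c(2) unfolding z_def by (simp add: algebra_simps)
  then have "real_of_int z < 1" "-1 < real_of_int z"
    using k l by argo+
  then have "z = 0"
    by linarith
  moreover have "odd z"
    unfolding z_def using c(1) by simp
  ultimately show False
    by simp
qed

lemma prod_half_moduli_mult_fraction:
  fixes a :: int and q :: "'i \<Rightarrow> nat"
  assumes "finite I" "j \<in> I" "\<And>i. i \<in> I \<Longrightarrow> q i mod 4 = 2" "coprime a (int (q j))"
  shows "\<exists>c::int. odd c \<and> real (\<Prod>i\<in>I. q i div 2) * (a / q j) = c / 2"
proof -
  define P where "P = (\<Prod>i\<in>I - {j}. q i div 2)"
  have "odd (q i div 2)" if "i \<in> I" for i
    using assms(3)[OF that] by presburger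
  then have "odd P"
    unfolding P_def using assms(1) by (simp add: even_prod_iff)
  have prod_eq: "(\<Prod>i\<in>I. q i div 2) = (q j div 2) * P"
    unfolding P_def using assms(1,2) by (simp add: prod.remove)
  have "q j = 2 * (q j div 2)" "q j div 2 > 0"
    using assms(3)[OF assms(2)] by presburger+
  then have q_eq: "real (q j) = 2 * real (q j div 2)" "q j div 2 > 0"
    by (metis of_nat_mult of_nat_numeral, simp)
  have "odd a"
  proof
    assume "even a"
    moreover have "even (int (q j))"
      using assms(3)[OF assms(2)] by presburger
    ultimately show False
      using coprime_common_divisor[OF assms(4), of 2] by simp
  qed
  show ?thesis
  proof (intro exI conjI)
    show "odd (a * int P)"
      using \<open>odd a\<close> \<open>odd P\<close> by simp
    show "real (\<Prod>i\<in>I. q i div 2) * (a / q j) = real_of_int (a * int P) / 2"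
      using q_eq by (simp add: prod_eq field_simps)
  qed
qed

lemma Md_T_eqI:
  assumes "\<And>A. A \<subseteq> {0..<1} \<Longrightarrow> A \<in> sets borel \<Longrightarrow> T_avoiding D A \<Longrightarrow> measure lborel A \<le> m"
    and "A\<^sub>0 \<subseteq> {0..<1}" "A\<^sub>0 \<in> sets borel" "T_avoiding D A\<^sub>0" "measure lborel A\<^sub>0 = m"
  shows "Md_T D = m"
  unfolding Md_T_def
proof (rule cSup_eq_maximum)
  show "m \<in> {measure lborel A | A. A \<subseteq> {0..<1} \<and> A \<in> sets borel \<and> T_avoiding D A}"
    using assms(2-5) by blast
qed (use assms(1) in blast)

theorem mainTheorem16:
  fixes r :: nat and a :: "nat \<Rightarrow> int" and q :: "nat \<Rightarrow> nat" and D :: "real set"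
  assumes "r \<ge> 1"
    and "\<And>j. j < r \<Longrightarrow> q j mod 4 = 2"
    and "\<And>j. j < r \<Longrightarrow> coprime (a j) (int (q j))"
    and "D = {real_of_int (a j) / real (q j) | j. j < r}"
  shows "Md_T D = 1/2 \<and>
    (\<exists>A. A \<subseteq> {0..<1} \<and> A \<in> sets borel \<and> T_avoiding D A \<and> measure lborel A = 1/2)"
proof -
  define M where "M = (\<Prod>i<r. q i div 2)"
  have "q i div 2 > 0" if "i < r" for i
    using assms(2)[OF that] by presburger
  then have "M > 0"
    unfolding M_def by (simp add: prod_pos)
  have "\<exists>c::int. odd c \<and> real M * d = c / 2" if "d \<in> D" for d
  proof -
    obtain j where "j < r" and d: "d = a j / q j"
      using \<open>d \<in> D\<close> assms(4) by blast
    then show ?thesis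
      unfolding M_def d using assms(2,3) by (intro prod_half_moduli_mult_fraction) auto
  qed
  then have witness: "half_comb M \<subseteq> {0..<1}" "half_comb M \<in> sets borel"
      "T_avoiding D (half_comb M)" "measure lborel (half_comb M) = 1/2"
    using half_comb_subset half_comb_borel half_comb_avoiding measure_half_comb[OF \<open>M > 0\<close>]
    by auto
  have "a 0 / q 0 \<in> D"
    using assms(1,4) by auto
  then have "measure lborel A \<le> 1/2"
    if "A \<subseteq> {0..<1}" "A \<in> sets borel" "T_avoiding D A" for A
    using measure_avoiding_le_half that by blast
  then have "Md_T D = 1/2"
    by (rule Md_T_eqI[OF _ witness])
  with witness show ?thesis
    by blast
qed

end
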